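(* Let $A$ be a Banach lattice algebra with identity and let $a\in A$. Then the ideal generated by $a$ (the intersection of all ideals of $A$ containing $a$) equals \[\{x\in A: |x|\le r|a|r'\ \text{for some } r,r'\in A_+\}.\]
   Context: A Banach lattice algebra is a real Banach lattice $A$ with an associative bilinear product making it a Banach algebra such that $xy\ge0$ whenever $x,y\ge0$; identity means a multiplicative identity of norm one. An ideal of $A$ is a linear subspace $I$ that is both an order ideal (if $|x|\le|y|$ and $y\in I$ then $x\in I$) and a two-sided algebraic ideal ($zx,xz\in I$ for all $z\in A$, $x\in I$). *)

theory Defs
  imports "HOL-Analysis.Analysis" "HOL-Library.Lattice_Algebras"
begin

class banach_lattice_algebra_1 =
  real_normed_algebra_1 + banach + ordered_real_vector + lattice_ab_group_add_abs +
  assumes norm_lattice_mono: "\<bar>x\<bar> \<le> \<bar>y\<bar> \<Longrightarrow> norm x \<le> norm y"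
    and mult_pos: "0 \<le> x \<Longrightarrow> 0 \<le> y \<Longrightarrow> 0 \<le> x * y"

definition bla_ideal :: "'a::banach_lattice_algebra_1 set \<Rightarrow> bool" where
  "bla_ideal I \<longleftrightarrow>
     0 \<in> I \<and>
     (\<forall>x\<in>I. \<forall>y\<in>I. x + y \<in> I) \<and>
     (\<forall>c::real. \<forall>x\<in>I. c *\<^sub>R x \<in> I) \<and>
     (\<forall>x y. \<bar>x\<bar> \<le> \<bar>y\<bar> \<and> y \<in> I \<longrightarrow> x \<in> I) \<and>
     (\<forall>z. \<forall>x\<in>I. z * x \<in> I \<and> x * z \<in> I)"

definition generated_ideal :: "'a::banach_lattice_algebra_1 \<Rightarrow> 'a set" where
  "generated_ideal a = \<Inter> {I. bla_ideal I \<and> a \<in> I}"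

end

theory Submission
  imports Defs
begin

text \<open>The set on the right-hand side is an ideal containing \<open>a\<close>, because \<open>\<bar>x y\<bar> \<le> \<bar>x\<bar> \<bar>y\<bar>\<close>
  lets the sandwich bounds absorb sums and products; and any ideal containing \<open>a\<close> contains
  \<open>\<bar>a\<bar>\<close>, hence every \<open>r \<bar>a\<bar> r'\<close>, hence everything dominated by such an element.\<close>

subclass (in banach_lattice_algebra_1) lattice_ring
proof
  fix a b c :: 'a
  assume "a \<le> b" "0 \<le> c"
  then have "0 \<le> c * (b - a)" "0 \<le> (b - a) * c" by (simp_all add: mult_pos)
  then show "c * a \<le> c * b" "a * c \<le> b * c"
    by (simp_all add: right_diff_distrib left_diff_distrib)
qed

definition sandwich_dominated :: "'a::banach_lattice_algebra_1 \<Rightarrow> 'a set" where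
  "sandwich_dominated a = {x. \<exists>r r'. 0 \<le> r \<and> 0 \<le> r' \<and> \<bar>x\<bar> \<le> r * \<bar>a\<bar> * r'}"

lemma sandwich_dominatedI:
  "0 \<le> r \<Longrightarrow> 0 \<le> r' \<Longrightarrow> \<bar>x\<bar> \<le> r * \<bar>a\<bar> * r' \<Longrightarrow> x \<in> sandwich_dominated a"
  unfolding sandwich_dominated_def by blast

lemma sandwich_dominatedE:
  assumes "x \<in> sandwich_dominated a"
  obtains r r' where "0 \<le> r" "0 \<le> r'" "\<bar>x\<bar> \<le> r * \<bar>a\<bar> * r'"
  using assms unfolding sandwich_dominated_def by blast

lemma self_in_sandwich_dominated: "a \<in> sandwich_dominated a"
proof (rule sandwich_dominatedI)
  have "\<bar>a\<bar> = \<bar>1 * a * 1\<bar>" by simp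
  also have "\<dots> \<le> \<bar>1 * a\<bar> * \<bar>1\<bar>" by (rule abs_le_mult)
  also have "\<dots> \<le> \<bar>1\<bar> * \<bar>a\<bar> * \<bar>1\<bar>" by (rule mult_right_mono[OF abs_le_mult]) simp
  finally show "\<bar>a\<bar> \<le> \<bar>1\<bar> * \<bar>a\<bar> * \<bar>1\<bar>" .
qed simp_all

lemma sandwich_dominated_add:
  assumes "x \<in> sandwich_dominated a" "y \<in> sandwich_dominated a"
  shows "x + y \<in> sandwich_dominated a"
proof -
  obtain r1 r1' where r1: "0 \<le> r1" "0 \<le> r1'" "\<bar>x\<bar> \<le> r1 * \<bar>a\<bar> * r1'"
    using assms(1) by (rule sandwich_dominatedE)
  obtain r2 r2' where r2: "0 \<le> r2" "0 \<le> r2'" "\<bar>y\<bar> \<le> r2 * \<bar>a\<bar> * r2'"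
    using assms(2) by (rule sandwich_dominatedE)
  have cross: "0 \<le> r1 * \<bar>a\<bar> * r2'" "0 \<le> r2 * \<bar>a\<bar> * r1'"
    using r1 r2 by simp_all
  have "\<bar>x + y\<bar> \<le> \<bar>x\<bar> + \<bar>y\<bar>" by (rule abs_triangle_ineq)
  also have "\<dots> \<le> r1 * \<bar>a\<bar> * r1' + r2 * \<bar>a\<bar> * r2'" using r1 r2 by (intro add_mono)
  also have "\<dots> \<le> (r1 + r2) * \<bar>a\<bar> * (r1' + r2')" using cross by (simp add: algebra_simps)
  finally show ?thesis using r1 r2 by (intro sandwich_dominatedI) simp_all
qed

lemma sandwich_dominated_mult_left:
  assumes "x \<in> sandwich_dominated a"
  shows "z * x \<in> sandwich_dominated a"
proof -
  obtain r r' where r: "0 \<le> r" "0 \<le> r'" "\<bar>x\<bar> \<le> r * \<bar>a\<bar> * r'"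
    using assms by (rule sandwich_dominatedE)
  have "\<bar>z * x\<bar> \<le> \<bar>z\<bar> * \<bar>x\<bar>" by (rule abs_le_mult)
  also have "\<dots> \<le> \<bar>z\<bar> * (r * \<bar>a\<bar> * r')" using r by (intro mult_left_mono) simp_all
  also have "\<dots> = (\<bar>z\<bar> * r) * \<bar>a\<bar> * r'" by (simp add: mult.assoc)
  finally show ?thesis using r by (intro sandwich_dominatedI) simp_all
qed

lemma sandwich_dominated_mult_right:
  assumes "x \<in> sandwich_dominated a"
  shows "x * z \<in> sandwich_dominated a"
proof -
  obtain r r' where r: "0 \<le> r" "0 \<le> r'" "\<bar>x\<bar> \<le> r * \<bar>a\<bar> * r'"
    using assms by (rule sandwich_dominatedE)
  have "\<bar>x * z\<bar> \<le> \<bar>x\<bar> * \<bar>z\<bar>" by (rule abs_le_mult)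
  also have "\<dots> \<le> (r * \<bar>a\<bar> * r') * \<bar>z\<bar>" using r by (intro mult_right_mono) simp_all
  also have "\<dots> = r * \<bar>a\<bar> * (r' * \<bar>z\<bar>)" by (simp add: mult.assoc)
  finally show ?thesis using r by (intro sandwich_dominatedI) simp_all
qed

lemma bla_ideal_sandwich_dominated: "bla_ideal (sandwich_dominated a)"
  unfolding bla_ideal_def
proof (intro conjI ballI allI impI)
  show "0 \<in> sandwich_dominated a" by (rule sandwich_dominatedI[of 0 0]) simp_all
next
  fix c :: real and x assume "x \<in> sandwich_dominated a"
  then show "c *\<^sub>R x \<in> sandwich_dominated a"
    unfolding scaleR_conv_of_real by (rule sandwich_dominated_mult_left)
next
  fix x y assume "\<bar>x\<bar> \<le> \<bar>y\<bar> \<and> y \<in> sandwich_dominated a"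
  then show "x \<in> sandwich_dominated a"
    by (auto elim!: sandwich_dominatedE intro: sandwich_dominatedI order_trans)
qed (simp_all add: sandwich_dominated_add sandwich_dominated_mult_left sandwich_dominated_mult_right)

lemma bla_ideal_abs: "bla_ideal I \<Longrightarrow> x \<in> I \<Longrightarrow> \<bar>x\<bar> \<in> I"
  unfolding bla_ideal_def by (metis abs_idempotent order_refl)

lemma sandwich_dominated_subset_bla_ideal:
  assumes I: "bla_ideal I" and "a \<in> I"
  shows "sandwich_dominated a \<subseteq> I"
proof
  fix x assume "x \<in> sandwich_dominated a"
  then obtain r r' where r: "0 \<le> r" "0 \<le> r'" "\<bar>x\<bar> \<le> r * \<bar>a\<bar> * r'"
    by (rule sandwich_dominatedE)
  have "r * \<bar>a\<bar> * r' \<in> I"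
    using bla_ideal_abs[OF I \<open>a \<in> I\<close>] I unfolding bla_ideal_def by blast
  moreover have "\<bar>x\<bar> \<le> \<bar>r * \<bar>a\<bar> * r'\<bar>" using r by simp
  ultimately show "x \<in> I" using I unfolding bla_ideal_def by blast
qed

lemma generated_ideal_eqI:
  assumes "bla_ideal J" "a \<in> J" "\<And>I. bla_ideal I \<Longrightarrow> a \<in> I \<Longrightarrow> J \<subseteq> I"
  shows "generated_ideal a = J"
  using assms unfolding generated_ideal_def by blast

theorem mainTheorem9:
  fixes a :: "'a::banach_lattice_algebra_1"
  shows "generated_ideal a =
           {x. \<exists>r r'. 0 \<le> r \<and> 0 \<le> r' \<and> \<bar>x\<bar> \<le> r * \<bar>a\<bar> * r'}"
  using generated_ideal_eqI[OF bla_ideal_sandwich_dominated self_in_sandwich_dominated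
      sandwich_dominated_subset_bla_ideal]
  unfolding sandwich_dominated_def .

end
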